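(* Let $n\ge2$ and let $\epsilon,\phi>0$ with $\epsilon\phi=1$ and $\epsilon\ne1$. Then the eigenpairs of $T_{n,\epsilon,\phi}$ are exactly (up to scaling of eigenvectors) the following $n$ pairs: the outlier $\lambda=\epsilon+\epsilon^{-1}=\epsilon+\phi$ with eigenvector $\mathbf v=[\epsilon^{-i+1}]_{i=1}^n=[\phi^{i-1}]_{i=1}^n$; and, for $k=1,\ldots,n-1$, $\lambda_k=2\cos\theta_k$ with eigenvector $\mathbf v^{(k)}=[\sin(i\theta_k)-\epsilon\sin((i-1)\theta_k)]_{i=1}^n$, where $\theta_k=k\pi/n$. Equivalently, with $V_{n,\epsilon}=[\mathbf v\,|\,\mathbf v^{(1)}\,|\cdots|\,\mathbf v^{(n-1)}]$ (invertible), $T_{n,\epsilon,\phi}=V_{n,\epsilon}\,\mathrm{diag}\bigl(\epsilon+\epsilon^{-1},2\cos\tfrac{\pi}{n},\ldots,2\cos\tfrac{(n-1)\pi}{n}\bigr)V_{n,\epsilon}^{-1}$.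
   Context: $T_{n,\epsilon,\phi}$ is the real symmetric tridiagonal $n\times n$ matrix with diagonal entries $(\epsilon,0,\ldots,0,\phi)$ and all sub- and super-diagonal entries equal to $1$. An outlier is an eigenvalue not in $[-2,2]$. *)

theory Defs
  imports "Jordan_Normal_Form.Char_Poly"
begin

text \<open>Indices are 0-based: row/column i here corresponds to i+1 in the paper.\<close>

definition T_mat :: "nat \<Rightarrow> real \<Rightarrow> real \<Rightarrow> real mat" where
  "T_mat n \<epsilon> \<phi> = mat n n (\<lambda>(i,j).
      if i = j then (if i = 0 then \<epsilon> else if i = n - 1 then \<phi> else 0)
      else if i + 1 = j \<or> j + 1 = i then 1 else 0)"

definition theta :: "nat \<Rightarrow> nat \<Rightarrow> real" where
  "theta n k = real k * pi / real n"

definition v_out :: "nat \<Rightarrow> real \<Rightarrow> real vec" where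
  "v_out n \<phi> = vec n (\<lambda>i. \<phi> ^ i)"

definition v_k :: "nat \<Rightarrow> real \<Rightarrow> nat \<Rightarrow> real vec" where
  "v_k n \<epsilon> k = vec n (\<lambda>i. sin (real (i + 1) * theta n k) - \<epsilon> * sin (real i * theta n k))"

definition V_mat :: "nat \<Rightarrow> real \<Rightarrow> real mat" where
  "V_mat n \<epsilon> = mat n n (\<lambda>(i,j). if j = 0 then (1 / \<epsilon>) ^ i
      else sin (real (i + 1) * theta n j) - \<epsilon> * sin (real i * theta n j))"

definition D_mat :: "nat \<Rightarrow> real \<Rightarrow> real mat" where
  "D_mat n \<epsilon> = mat n n (\<lambda>(i,j). if i = j then
      (if i = 0 then \<epsilon> + 1 / \<epsilon> else 2 * cos (theta n i)) else 0)"

end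

theory Submission
  imports Defs
begin

text \<open>
  T is symmetric, so it suffices to exhibit n eigenvectors with pairwise distinct eigenvalues:
  eigenvectors of a symmetric matrix for distinct eigenvalues are orthogonal, hence the matrix
  V of these columns is inverted by its transpose with rows rescaled, and every eigenvector of T
  is a multiple of one column.
  Because \<open>\<epsilon>\<phi> = 1\<close>, the geometric vector \<open>[\<phi>^i]\<close> is an eigenvector for the outlier
  \<open>\<epsilon> + \<phi> > 2\<close>.  For the others, \<open>s m = sin (m\<theta>)\<close> obeys
  \<open>s (m+2) + s m = 2 cos \<theta> \<cdot> s (m+1)\<close>, so does every combination \<open>s (i+1) - \<epsilon> s i\<close>; the
  first row holds because \<open>s 0 = 0\<close>, the last because \<open>s n = sin (k\<pi>) = 0\<close>.
  The values \<open>2 cos \<theta>\<^sub>k\<close> are distinct since cos is injective on \<open>(0, \<pi>)\<close>.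
\<close>

lemma scalar_prod_self_pos:
  fixes x :: "real vec"
  assumes x: "x \<in> carrier_vec n" and nz: "x \<noteq> 0\<^sub>v n"
  shows "x \<bullet> x > 0"
proof -
  obtain i where i: "i < n" "x $ i \<noteq> 0"
    using nz x by (metis eq_vecI carrier_vecD index_zero_vec(1) index_zero_vec(2))
  have "x $ i * x $ i \<le> (\<Sum>k\<in>{0..<n}. x $ k * x $ k)"
    by (rule member_le_sum) (use i in auto)
  also have "\<dots> = x \<bullet> x" using x unfolding scalar_prod_def by simp
  finally show ?thesis using i(2) by (metis not_real_square_gt_zero order_less_le_trans)
qed

locale symmetric_eigenbasis =
  fixes n :: nat and T V :: "real mat" and d :: "nat \<Rightarrow> real"
  assumes T_carrier: "T \<in> carrier_mat n n"
    and T_symmetric: "transpose_mat T = T"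
    and V_carrier: "V \<in> carrier_mat n n"
    and col_eigen: "j < n \<Longrightarrow> T *\<^sub>v col V j = d j \<cdot>\<^sub>v col V j"
    and col_nonzero: "j < n \<Longrightarrow> col V j \<noteq> 0\<^sub>v n"
    and eigenvalues_distinct: "inj_on d {..<n}"
begin

lemma col_carrier [simp]: "col V j \<in> carrier_vec n"
  using V_carrier by auto

lemma col_sprod_mult:
  assumes j: "j < n" and x: "x \<in> carrier_vec n"
  shows "col V j \<bullet> (T *\<^sub>v x) = d j * (col V j \<bullet> x)"
proof -
  have "col V j \<bullet> (T *\<^sub>v x) = (T *\<^sub>v col V j) \<bullet> x"
    using transpose_vec_mult_scalar[OF T_carrier x col_carrier] T_symmetric by simp
  also have "\<dots> = d j * (col V j \<bullet> x)"
    using col_eigen[OF j] smult_scalar_prod_distrib[OF col_carrier x] by simp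
  finally show ?thesis .
qed

lemma col_sprod_eigenvector:
  assumes l: "l < n" and x: "x \<in> carrier_vec n" and Tx: "T *\<^sub>v x = lam \<cdot>\<^sub>v x"
    and "d l \<noteq> lam"
  shows "col V l \<bullet> x = 0"
proof -
  have "d l * (col V l \<bullet> x) = lam * (col V l \<bullet> x)"
    using col_sprod_mult[OF l x] Tx scalar_prod_smult_distrib[OF col_carrier x] by (simp add: eq_commute[of lam])
  thus ?thesis using \<open>d l \<noteq> lam\<close> by auto
qed

lemma cols_orthogonal:
  assumes "j < n" "l < n" "j \<noteq> l"
  shows "col V j \<bullet> col V l = 0"
proof (rule col_sprod_eigenvector[OF assms(1) col_carrier col_eigen[OF assms(2)]])
  show "d j \<noteq> d l" using eigenvalues_distinct assms unfolding inj_on_def by auto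
qed

text \<open>By orthogonality \<open>V\<^sup>T V\<close> is diagonal with entries \<open>\<parallel>col V j\<parallel>\<^sup>2\<close>.\<close>

definition orth_inverse :: "real mat" where
  "orth_inverse = mat n n (\<lambda>(j, i). V $$ (i, j) / (col V j \<bullet> col V j))"

lemma orth_inverse_carrier [simp]: "orth_inverse \<in> carrier_mat n n"
  unfolding orth_inverse_def by simp

lemma dim_orth_inverse [simp]: "dim_row orth_inverse = n" "dim_col orth_inverse = n"
  unfolding orth_inverse_def by simp_all

lemma row_orth_inverse:
  "j < n \<Longrightarrow> row orth_inverse j = (1 / (col V j \<bullet> col V j)) \<cdot>\<^sub>v col V j"
  unfolding orth_inverse_def using V_carrier by (intro eq_vecI) auto

lemma orth_inverse_mult: "orth_inverse * V = 1\<^sub>m n"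
proof (rule eq_matI)
  fix j l assume "j < dim_row (1\<^sub>m n :: real mat)" "l < dim_col (1\<^sub>m n :: real mat)"
  hence jl: "j < n" "l < n" by auto
  have "col V j \<bullet> col V j > 0" using scalar_prod_self_pos[OF col_carrier col_nonzero[OF jl(1)]] .
  moreover have "(orth_inverse * V) $$ (j, l) = (1 / (col V j \<bullet> col V j)) * (col V j \<bullet> col V l)"
    using jl V_carrier row_orth_inverse[OF jl(1)] by simp
  ultimately show "(orth_inverse * V) $$ (j, l) = 1\<^sub>m n $$ (j, l)"
    using cols_orthogonal[OF jl] jl by auto
qed (use V_carrier in auto)

lemma mult_orth_inverse: "V * orth_inverse = 1\<^sub>m n"
  by (rule mat_mult_left_right_inverse[OF orth_inverse_carrier V_carrier orth_inverse_mult])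

lemma orthogonal_to_cols_imp_zero:
  assumes x: "x \<in> carrier_vec n" and orth: "\<And>l. l < n \<Longrightarrow> col V l \<bullet> x = 0"
  shows "x = 0\<^sub>v n"
proof -
  have "orth_inverse *\<^sub>v x = 0\<^sub>v n"
    using orth row_orth_inverse smult_scalar_prod_distrib[OF col_carrier x] by (intro eq_vecI) auto
  hence "V *\<^sub>v (orth_inverse *\<^sub>v x) = 0\<^sub>v n" using V_carrier by auto
  thus ?thesis
    using x mult_orth_inverse assoc_mult_mat_vec[OF V_carrier orth_inverse_carrier x] by simp
qed

lemma mult_eq_mat_diag: "T * V = V * mat_diag n d"
proof (rule eq_matI)
  fix i j assume "i < dim_row (V * mat_diag n d)" "j < dim_col (V * mat_diag n d)"
  hence ij: "i < n" "j < n" using V_carrier mat_diag_dim[of n d] by auto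
  have "(T * V) $$ (i, j) = (T *\<^sub>v col V j) $ i" using T_carrier V_carrier ij by simp
  thus "(T * V) $$ (i, j) = (V * mat_diag n d) $$ (i, j)"
    using col_eigen[OF ij(2)] ij V_carrier by (simp add: mat_diag_mult_right[OF V_carrier])
qed (use T_carrier V_carrier in \<open>auto simp: mat_diag_def\<close>)

lemma diagonalization: "T = V * mat_diag n d * orth_inverse"
proof -
  have "T = T * (V * orth_inverse)" using mult_orth_inverse T_carrier by simp
  also have "\<dots> = T * V * orth_inverse"
    using assoc_mult_mat[OF T_carrier V_carrier orth_inverse_carrier] by simp
  finally show ?thesis using mult_eq_mat_diag by simp
qed

lemma eigenvector_smult_col:
  assumes "j < n" and "c \<noteq> 0"
  shows "eigenvector T (c \<cdot>\<^sub>v col V j) (d j)"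
proof -
  have "c \<cdot>\<^sub>v col V j \<noteq> 0\<^sub>v n"
  proof
    assume "c \<cdot>\<^sub>v col V j = 0\<^sub>v n"
    hence "\<forall>i<n. c * col V j $ i = 0"
      by (metis carrier_vecD col_carrier index_smult_vec(1) index_zero_vec(1))
    hence "col V j = 0\<^sub>v n" using \<open>c \<noteq> 0\<close> V_carrier by (intro eq_vecI) auto
    thus False using col_nonzero[OF assms(1)] by simp
  qed
  moreover have "T *\<^sub>v (c \<cdot>\<^sub>v col V j) = d j \<cdot>\<^sub>v (c \<cdot>\<^sub>v col V j)"
    using col_eigen[OF assms(1)] mult_mat_vec[OF T_carrier col_carrier]
    by (simp add: smult_smult_assoc mult.commute)
  ultimately show ?thesis unfolding eigenvector_def using T_carrier by simp
qed

lemma eq_smult_col_if_orthogonal_to_other_cols: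
  assumes x: "x \<in> carrier_vec n" and j: "j < n"
    and orth: "\<And>l. l < n \<Longrightarrow> l \<noteq> j \<Longrightarrow> col V l \<bullet> x = 0"
  shows "x = ((col V j \<bullet> x) / (col V j \<bullet> col V j)) \<cdot>\<^sub>v col V j" (is "x = ?c \<cdot>\<^sub>v _")
proof -
  have norm_pos: "col V j \<bullet> col V j > 0"
    using scalar_prod_self_pos[OF col_carrier col_nonzero[OF j]] .
  have residual: "x - ?c \<cdot>\<^sub>v col V j = 0\<^sub>v n"
  proof (rule orthogonal_to_cols_imp_zero)
    fix l assume l: "l < n"
    have "col V l \<bullet> (x - ?c \<cdot>\<^sub>v col V j) = col V l \<bullet> x - ?c * (col V l \<bullet> col V j)"
      using x by (simp add: scalar_prod_minus_distrib[of _ n])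
    also have "\<dots> = 0"
    proof (cases "l = j")
      case False
      thus ?thesis using orth[OF l] cols_orthogonal[OF l j] by simp
    qed (use norm_pos in simp)
    finally show "col V l \<bullet> (x - ?c \<cdot>\<^sub>v col V j) = 0" .
  qed (use x in simp)
  show ?thesis
  proof (rule eq_vecI)
    fix i assume "i < dim_vec (?c \<cdot>\<^sub>v col V j)"
    thus "x $ i = (?c \<cdot>\<^sub>v col V j) $ i"
      using arg_cong[OF residual, of "\<lambda>w. w $ i"] x V_carrier by simp
  qed (use x V_carrier in simp)
qed

lemma eigenvector_imp_smult_col:
  assumes "eigenvector T v lam"
  shows "\<exists>j<n. lam = d j \<and> (\<exists>c. c \<noteq> 0 \<and> v = c \<cdot>\<^sub>v col V j)"
proof -
  have v: "v \<in> carrier_vec n" "v \<noteq> 0\<^sub>v n" and Tv: "T *\<^sub>v v = lam \<cdot>\<^sub>v v"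
    using assms T_carrier unfolding eigenvector_def by auto
  obtain j where j: "j < n" "col V j \<bullet> v \<noteq> 0"
    using orthogonal_to_cols_imp_zero[OF v(1)] v(2) by blast
  have lam: "lam = d j" using col_sprod_eigenvector[OF j(1) v(1) Tv] j(2) by blast
  have "col V l \<bullet> v = 0" if "l < n" "l \<noteq> j" for l
  proof (rule col_sprod_eigenvector[OF that(1) v(1) Tv])
    show "d l \<noteq> lam" using eigenvalues_distinct that j(1) lam unfolding inj_on_def by auto
  qed
  hence "v = ((col V j \<bullet> v) / (col V j \<bullet> col V j)) \<cdot>\<^sub>v col V j"
    by (rule eq_smult_col_if_orthogonal_to_other_cols[OF v(1) j(1)])
  moreover have "(col V j \<bullet> v) / (col V j \<bullet> col V j) \<noteq> 0"
    using j(2) scalar_prod_self_pos[OF col_carrier col_nonzero[OF j(1)]] by simp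
  ultimately show ?thesis using j(1) lam by blast
qed

lemma eigenvector_iff_smult_col:
  "eigenvector T v lam \<longleftrightarrow> (\<exists>j<n. lam = d j \<and> (\<exists>c. c \<noteq> 0 \<and> v = c \<cdot>\<^sub>v col V j))"
  using eigenvector_imp_smult_col eigenvector_smult_col by blast

end

lemma eq_one_divide_of_mult_eq_1: "a * b = 1 \<Longrightarrow> b = 1 / (a :: 'a :: field)"
  by (metis mult_cancel_left1 nonzero_mult_div_cancel_left mult_zero_left zero_neq_one)

lemma T_mat_carrier [simp]: "T_mat n \<epsilon> \<phi> \<in> carrier_mat n n"
  unfolding T_mat_def by simp

lemma transpose_T_mat: "transpose_mat (T_mat n \<epsilon> \<phi>) = T_mat n \<epsilon> \<phi>"
  unfolding T_mat_def by (rule eq_matI) auto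

lemma T_mat_mult_vec_nth:
  assumes n: "n \<ge> 2" and i: "i < n"
  shows "(T_mat n \<epsilon> \<phi> *\<^sub>v vec n f) $ i =
     (if i = 0 then \<epsilon> * f 0 else f (i - 1)) + (if i = n - 1 then \<phi> * f (n - 1) else f (i + 1))"
proof -
  have "(T_mat n \<epsilon> \<phi> *\<^sub>v vec n f) $ i = (\<Sum>j\<in>{0..<n}. T_mat n \<epsilon> \<phi> $$ (i, j) * f j)"
    using i unfolding T_mat_def by (simp add: scalar_prod_def)
  also have "\<dots> = (\<Sum>j\<in>{0..<n}.
      (if j = i then (if i = 0 then \<epsilon> else if i = n - 1 then \<phi> else 0) * f i else 0)
      + (if j = i + 1 then f j else 0) + (if j + 1 = i then f j else 0))"
    by (rule sum.cong) (use i in \<open>auto simp: T_mat_def\<close>)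
  also have "\<dots> = (if i = 0 then \<epsilon> else if i = n - 1 then \<phi> else 0) * f i
      + (if i + 1 < n then f (i + 1) else 0) + (if i \<ge> 1 then f (i - 1) else 0)"
  proof -
    have "(\<Sum>j\<in>{0..<n}. if j + 1 = i then f j else 0)
        = (\<Sum>j\<in>{0..<n}. if j = i - 1 \<and> i \<ge> 1 then f (i - 1) else 0)"
      by (rule sum.cong) auto
    thus ?thesis unfolding sum.distrib using i by (simp add: sum.delta) linarith
  qed
  also have "\<dots> = (if i = 0 then \<epsilon> * f 0 else f (i - 1))
      + (if i = n - 1 then \<phi> * f (n - 1) else f (i + 1))"
    using n i by (cases "i = 0") auto
  finally show ?thesis .
qed

lemma T_mat_mult_geometric:
  assumes n: "n \<ge> 2" and \<epsilon>\<phi>: "\<epsilon> * \<phi> = 1"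
  shows "T_mat n \<epsilon> \<phi> *\<^sub>v vec n (\<lambda>i. \<phi> ^ i) = (\<epsilon> + \<phi>) \<cdot>\<^sub>v vec n (\<lambda>i. \<phi> ^ i)"
proof (rule eq_vecI)
  fix i assume "i < dim_vec ((\<epsilon> + \<phi>) \<cdot>\<^sub>v vec n (\<lambda>i. \<phi> ^ i))"
  hence i: "i < n" by simp
  have \<epsilon>_pow: "\<epsilon> * \<phi> ^ Suc m = \<phi> ^ m" for m
    using \<epsilon>\<phi> by (metis mult.assoc mult_1 power_Suc)
  show "(T_mat n \<epsilon> \<phi> *\<^sub>v vec n (\<lambda>i. \<phi> ^ i)) $ i = ((\<epsilon> + \<phi>) \<cdot>\<^sub>v vec n (\<lambda>i. \<phi> ^ i)) $ i"
  proof (cases "i = 0")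
    case True
    thus ?thesis using n by (simp add: T_mat_mult_vec_nth)
  next
    case False
    hence "\<epsilon> * \<phi> ^ i = \<phi> ^ (i - 1)" using \<epsilon>_pow[of "i - 1"] by simp
    moreover have "(if i = n - 1 then \<phi> * \<phi> ^ (n - 1) else \<phi> ^ (i + 1)) = \<phi> * \<phi> ^ i" by simp
    ultimately show ?thesis using False n i by (simp add: T_mat_mult_vec_nth distrib_right)
  qed
qed (simp add: T_mat_def)

lemma T_mat_mult_recurrence:
  fixes s :: "nat \<Rightarrow> real"
  assumes n: "n \<ge> 2" and \<epsilon>\<phi>: "\<epsilon> * \<phi> = 1"
    and rec: "\<And>m. s (m + 2) + s m = c * s (m + 1)" and s0: "s 0 = 0" and sn: "s n = 0"
  shows "T_mat n \<epsilon> \<phi> *\<^sub>v vec n (\<lambda>i. s (i + 1) - \<epsilon> * s i)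
       = c \<cdot>\<^sub>v vec n (\<lambda>i. s (i + 1) - \<epsilon> * s i)"
proof (rule eq_vecI)
  fix i assume "i < dim_vec (c \<cdot>\<^sub>v vec n (\<lambda>i. s (i + 1) - \<epsilon> * s i))"
  hence i: "i < n" by simp
  show "(T_mat n \<epsilon> \<phi> *\<^sub>v vec n (\<lambda>i. s (i + 1) - \<epsilon> * s i)) $ i
      = (c \<cdot>\<^sub>v vec n (\<lambda>i. s (i + 1) - \<epsilon> * s i)) $ i"
  proof (cases i)
    case 0
    have "s (Suc (Suc 0)) + s 0 = c * s 1" using rec[of 0] by simp
    thus ?thesis using 0 n s0 by (simp add: T_mat_mult_vec_nth algebra_simps)
  next
    case (Suc m)
    have r1: "s (m + 2) + s m = c * s (m + 1)" and r2: "s (m + 3) + s (m + 1) = c * s (m + 2)"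
      using rec[of m] rec[of "m + 1"] by (simp_all add: numeral_eq_Suc)
    show ?thesis
    proof (cases "i = n - 1")
      case True
      hence "n = m + 2" using Suc n by simp
      moreover have "\<phi> * (\<epsilon> * s (m + 1)) = s (m + 1)" using \<epsilon>\<phi> by (simp add: algebra_simps)
      ultimately show ?thesis using Suc r1 sn by (simp add: T_mat_mult_vec_nth algebra_simps)
    next
      case False
      have "\<epsilon> * s m + \<epsilon> * s (m + 2) = c * (\<epsilon> * s (m + 1))"
        using arg_cong[OF r1, of "(*) \<epsilon>"] by (simp add: algebra_simps)
      thus ?thesis using Suc False i n r1 r2 by (simp add: T_mat_mult_vec_nth algebra_simps numeral_eq_Suc)
    qed
  qed
qed (simp add: T_mat_def)

lemma sin_mult_recurrence:
  "sin (real (m + 2) * t) + sin (real m * t) = 2 * cos t * sin (real (m + 1) * t)"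
proof -
  have "real (m + 2) * t = real (m + 1) * t + t" "real m * t = real (m + 1) * t - t"
    by (simp_all add: algebra_simps)
  thus ?thesis by (simp add: sin_add sin_diff)
qed

definition T_eigenvalue :: "nat \<Rightarrow> real \<Rightarrow> nat \<Rightarrow> real" where
  "T_eigenvalue n \<epsilon> j = (if j = 0 then \<epsilon> + 1 / \<epsilon> else 2 * cos (theta n j))"

lemma D_mat_eq_mat_diag: "D_mat n \<epsilon> = mat_diag n (T_eigenvalue n \<epsilon>)"
  unfolding D_mat_def mat_diag_def T_eigenvalue_def by (rule eq_matI) auto

lemma col_V_mat_0:
  assumes "0 < n" and "\<epsilon> * \<phi> = 1"
  shows "col (V_mat n \<epsilon>) 0 = v_out n \<phi>"
  using assms eq_one_divide_of_mult_eq_1[OF assms(2)] unfolding V_mat_def v_out_def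
  by (intro eq_vecI) auto

lemma col_V_mat: "0 < j \<Longrightarrow> j < n \<Longrightarrow> col (V_mat n \<epsilon>) j = v_k n \<epsilon> j"
  unfolding V_mat_def v_k_def by (intro eq_vecI) auto

lemma theta_bounds: "0 < j \<Longrightarrow> j < n \<Longrightarrow> 0 < theta n j \<and> theta n j < pi"
  by (auto simp: theta_def field_simps)

lemma T_mat_mult_col_V_mat:
  assumes n: "n \<ge> 2" and \<epsilon>\<phi>: "\<epsilon> * \<phi> = 1" and j: "j < n"
  shows "T_mat n \<epsilon> \<phi> *\<^sub>v col (V_mat n \<epsilon>) j = T_eigenvalue n \<epsilon> j \<cdot>\<^sub>v col (V_mat n \<epsilon>) j"
proof (cases "j = 0")
  case True
  have "\<phi> = 1 / \<epsilon>" using \<epsilon>\<phi> by (rule eq_one_divide_of_mult_eq_1)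
  thus ?thesis using True n \<epsilon>\<phi> col_V_mat_0[of n \<epsilon> \<phi>] T_mat_mult_geometric[OF n \<epsilon>\<phi>]
    by (simp add: v_out_def T_eigenvalue_def)
next
  case False
  define s where "s m = sin (real m * theta n j)" for m
  have rec: "s (m + 2) + s m = 2 * cos (theta n j) * s (m + 1)" for m
    unfolding s_def by (rule sin_mult_recurrence)
  have "s 0 = 0" "s n = 0" unfolding s_def theta_def using n by simp_all
  note T_mat_mult_recurrence[OF n \<epsilon>\<phi> rec this]
  thus ?thesis using False j col_V_mat[of j n \<epsilon>]
    by (simp add: v_k_def s_def T_eigenvalue_def)
qed

lemma col_V_mat_nonzero:
  assumes j: "j < n"
  shows "col (V_mat n \<epsilon>) j \<noteq> 0\<^sub>v n"
proof -
  have "col (V_mat n \<epsilon>) j $ 0 \<noteq> 0"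
  proof (cases "j = 0")
    case False
    thus ?thesis using j theta_bounds[of j n] sin_gt_zero[of "theta n j"] by (simp add: V_mat_def)
  qed (use j in \<open>simp add: V_mat_def\<close>)
  thus ?thesis using j by auto
qed

lemma two_less_add_inverse:
  fixes \<epsilon> :: real
  assumes "0 < \<epsilon>" and "\<epsilon> \<noteq> 1"
  shows "2 < \<epsilon> + 1 / \<epsilon>"
proof -
  have "0 < (\<epsilon> - 1)\<^sup>2" using assms(2) by simp
  thus ?thesis using assms(1) by (simp add: field_simps power2_eq_square algebra_simps)
qed

lemma inj_on_T_eigenvalue:
  assumes "0 < \<epsilon>" and "\<epsilon> \<noteq> 1"
  shows "inj_on (T_eigenvalue n \<epsilon>) {..<n}"
proof (rule inj_onI)
  fix j l assume j: "j \<in> {..<n}" and l: "l \<in> {..<n}"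
    and eq: "T_eigenvalue n \<epsilon> j = T_eigenvalue n \<epsilon> l"
  have outlier: "T_eigenvalue n \<epsilon> 0 \<noteq> T_eigenvalue n \<epsilon> k" if "k \<noteq> 0" for k
  proof -
    have "2 * cos (theta n k) < \<epsilon> + 1 / \<epsilon>"
      using two_less_add_inverse[OF assms] cos_le_one[of "theta n k"] by linarith
    thus ?thesis using that by (simp add: T_eigenvalue_def)
  qed
  show "j = l"
  proof (cases "j = 0 \<or> l = 0")
    case True
    thus ?thesis using outlier eq by metis
  next
    case False
    hence "cos (theta n j) = cos (theta n l)" using eq by (simp add: T_eigenvalue_def)
    hence "theta n j = theta n l"
      using theta_bounds[of j n] theta_bounds[of l n] False j l by (auto intro: cos_inj_pi)
    thus ?thesis using j unfolding theta_def by simp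
  qed
qed

theorem mainTheorem11:
  fixes n :: nat and \<epsilon> \<phi> :: real
  assumes "n \<ge> 2" and "\<epsilon> > 0" and "\<phi> > 0" and "\<epsilon> * \<phi> = 1" and "\<epsilon> \<noteq> 1"
  shows "(\<forall>v lam. eigenvector (T_mat n \<epsilon> \<phi>) v lam \<longleftrightarrow>
            ((lam = \<epsilon> + \<phi> \<and> (\<exists>c. c \<noteq> 0 \<and> v = c \<cdot>\<^sub>v v_out n \<phi>)) \<or>
             (\<exists>k \<in> {1..<n}. lam = 2 * cos (theta n k) \<and> (\<exists>c. c \<noteq> 0 \<and> v = c \<cdot>\<^sub>v v_k n \<epsilon> k))))
       \<and> \<epsilon> + \<phi> = \<epsilon> + 1 / \<epsilon>
       \<and> v_out n \<phi> = vec n (\<lambda>i. (1 / \<epsilon>) ^ i)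
       \<and> invertible_mat (V_mat n \<epsilon>)
       \<and> (\<exists>W. inverts_mat (V_mat n \<epsilon>) W \<and> inverts_mat W (V_mat n \<epsilon>)
              \<and> T_mat n \<epsilon> \<phi> = V_mat n \<epsilon> * D_mat n \<epsilon> * W)"
proof -
  have \<phi>: "\<phi> = 1 / \<epsilon>" using assms(4) by (rule eq_one_divide_of_mult_eq_1)
  interpret symmetric_eigenbasis n "T_mat n \<epsilon> \<phi>" "V_mat n \<epsilon>" "T_eigenvalue n \<epsilon>"
    using assms transpose_T_mat T_mat_mult_col_V_mat col_V_mat_nonzero inj_on_T_eigenvalue
    by unfold_locales (auto simp: V_mat_def)
  have "0 < n" using assms(1) by simp
  hence split_zero: "(\<exists>j<n. P j) \<longleftrightarrow> P 0 \<or> (\<exists>k \<in> {1..<n}. P k)" for P :: "nat \<Rightarrow> bool"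
    by (metis atLeastLessThan_iff bot_nat_0.not_eq_extremum less_one linorder_not_le)
  have "eigenvector (T_mat n \<epsilon> \<phi>) v lam \<longleftrightarrow>
            ((lam = \<epsilon> + \<phi> \<and> (\<exists>c. c \<noteq> 0 \<and> v = c \<cdot>\<^sub>v v_out n \<phi>)) \<or>
             (\<exists>k \<in> {1..<n}. lam = 2 * cos (theta n k) \<and> (\<exists>c. c \<noteq> 0 \<and> v = c \<cdot>\<^sub>v v_k n \<epsilon> k)))"
    for v lam
    unfolding eigenvector_iff_smult_col split_zero
    using col_V_mat_0[OF \<open>0 < n\<close> assms(4)] col_V_mat by (simp add: T_eigenvalue_def \<phi>)
  moreover have "inverts_mat (V_mat n \<epsilon>) orth_inverse" "inverts_mat orth_inverse (V_mat n \<epsilon>)"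
    using orth_inverse_mult mult_orth_inverse V_carrier unfolding inverts_mat_def by auto
  ultimately show ?thesis
    using diagonalization V_carrier
    by (auto simp: \<phi> v_out_def D_mat_eq_mat_diag invertible_mat_def square_mat.simps)
qed

end
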